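(* Let Assumptions (A1) and (A2) below hold, let $T>0$, and let $M:=\inf_{x\in X\setminus\mathcal{N}}\ell^{\star}(x)$, where $\mathcal{N}$ and $\gamma$ are as in (A2). Then for each $C\in\mathbb{R}_{>0}$ such that $\mathcal{N}\cap X\subseteq V_T^{-1}[0,C]$, the inequality \[ V_T(x)\le \beta\,\ell^{\star}(x)\qquad\forall\,x\in V_T^{-1}[0,C] \] holds with $\beta:=\max\{C/M,\gamma\}$. (A1): there exist class-$\mathcal{K}_\infty$ functions $\underline{\eta},\overline{\eta}$ with $\underline{\eta}(|x-\bar x|)\le \ell^{\star}(x)\le\overline{\eta}(|x-\bar x|)$ for all $x\in X$. (A2): there exist $\gamma\in\mathbb{R}_{>0}$ and a neighbourhood $\mathcal{N}$ of $\bar x$ such that $V_\infty(x)\le\gamma\,\ell^{\star}(x)$ for all $x\in\mathcal{N}\cap X$.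
   Context: Consider the control system $\dot x(t)=f(x(t),u(t))$, $x(0)=x_0$, with $f:\mathbb{R}^n\times\mathbb{R}^m\to\mathbb{R}^n$ continuous and locally Lipschitz in its first argument on $\mathbb{R}^n\setminus\{0\}$; for $u\in L^\infty_{\mathrm{loc}}(\mathbb{R}_{\ge0},\mathbb{R}^m)$ the unique (maximal) solution is denoted $x(t;x_0,u)$. A set $\mathcal{E}\subseteq\mathbb{R}^n\times\mathbb{R}^m$ defines the constraints $(x(t),u(t))\in\mathcal{E}$. Let $U(x):=\{u\in\mathbb{R}^m:(x,u)\in\mathcal{E}\}$ and $X:=\{x: U(x)\neq\emptyset\}$ (the projection of $\mathcal{E}$ onto $\mathbb{R}^n$). For $x_0\in X$ and $T>0$, $\mathcal{U}_T(x_0)$ is the set of $u\in L^\infty_{\mathrm{loc}}(\mathbb{R}_{\ge0},\mathbb{R}^m)$ such that the solution exists and satisfies $(x(t;x_0,u),u(t))\in\mathcal{E}$ on $[0,T]$; $\mathcal{U}_\infty(x_0)$ is defined analogously for all $t\ge0$. The stage cost $\ell:\mathbb{R}^n\times\mathbb{R}^m\to\mathbb{R}_{\ge0}$ is continuous; $J_T(x_0,u):=\int_0^T\ell(x(s;x_0,u),u(s))\,\mathrm{d}s$, $V_T(x_0):=\inf_{u\in\mathcal{U}_T(x_0)}J_T(x_0,u)$ (with $V_T(x_0)=+\infty$ if $\mathcal{U}_T(x_0)=\emptyset$), and $V_\infty$ is defined analogously with the infinite-horizon cost over $\mathcal{U}_\infty(x_0)$. $V_T^{-1}[0,C]:=\{x\in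 X: V_T(x)\le C\}$. $\ell^{\star}(x):=\inf_{u\in U(x)}\ell(x,u)$. The point $\bar x\in X$ is a controlled equilibrium: there is $\bar u\in U(\bar x)$ with $f(\bar x,\bar u)=0$. *)

theory Defs
  imports "HOL-Analysis.Analysis"
begin

definition class_Kinf :: "(real \<Rightarrow> real) \<Rightarrow> bool" where
  "class_Kinf \<eta> \<longleftrightarrow> continuous_on {0..} \<eta> \<and> \<eta> 0 = 0 \<and> strict_mono_on {0..} \<eta>
     \<and> filterlim \<eta> at_top at_top"

definition Linf_loc :: "(real \<Rightarrow> 'b::euclidean_space) \<Rightarrow> bool" where
  "Linf_loc u \<longleftrightarrow> u \<in> borel_measurable (restrict_space lebesgue {0..})
     \<and> (\<forall>T. \<exists>B. AE s in lebesgue. s \<in> {0..T} \<longrightarrow> norm (u s) \<le> B)"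

definition loc_lipschitz_off0 :: "('a::real_normed_vector \<Rightarrow> 'b::metric_space \<Rightarrow> 'a) \<Rightarrow> bool" where
  "loc_lipschitz_off0 f \<longleftrightarrow> (\<forall>x u. x \<noteq> 0 \<longrightarrow> (\<exists>r>0. \<exists>L. \<forall>y\<in>ball x r. \<forall>z\<in>ball x r. \<forall>v\<in>ball u r.
       norm (f y v - f z v) \<le> L * norm (y - z)))"

definition is_solution ::
  "('a::euclidean_space \<Rightarrow> 'b::euclidean_space \<Rightarrow> 'a) \<Rightarrow> 'a \<Rightarrow> (real \<Rightarrow> 'b) \<Rightarrow> real set \<Rightarrow> (real \<Rightarrow> 'a) \<Rightarrow> bool" where
  "is_solution f x0 u S x \<longleftrightarrow> (\<forall>t\<in>S. set_integrable lebesgue {0..t} (\<lambda>s. f (x s) (u s))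
       \<and> x t = x0 + (LINT s:{0..t}|lebesgue. f (x s) (u s)))"

definition admissible ::
  "('a::euclidean_space \<Rightarrow> 'b::euclidean_space \<Rightarrow> 'a) \<Rightarrow> ('a \<times> 'b) set \<Rightarrow> 'a \<Rightarrow> real set
     \<Rightarrow> ((real \<Rightarrow> 'a) \<times> (real \<Rightarrow> 'b)) set" where
  "admissible f E x0 S = {(x, u). Linf_loc u \<and> is_solution f x0 u S x \<and> (\<forall>t\<in>S. (x t, u t) \<in> E)}"

definition cost :: "('a \<Rightarrow> 'b \<Rightarrow> real) \<Rightarrow> real set \<Rightarrow> (real \<Rightarrow> 'a) \<Rightarrow> (real \<Rightarrow> 'b) \<Rightarrow> ereal" where
  "cost lc S x u = enn2ereal (\<integral>\<^sup>+ s. indicator S s * ennreal (lc (x s) (u s)) \<partial>lebesgue)"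

text \<open>Optimal value function over time set S (Inf of empty set = +\<infinity>).\<close>
definition Vfun ::
  "('a::euclidean_space \<Rightarrow> 'b::euclidean_space \<Rightarrow> 'a) \<Rightarrow> ('a \<times> 'b) set \<Rightarrow> ('a \<Rightarrow> 'b \<Rightarrow> real)
     \<Rightarrow> real set \<Rightarrow> 'a \<Rightarrow> ereal" where
  "Vfun f E lc S x0 = (INF p \<in> admissible f E x0 S. cost lc S (fst p) (snd p))"

definition V_T where "V_T f E lc (T::real) = Vfun f E lc {0..T}"
definition V_inf where "V_inf f E lc = Vfun f E lc {0..}"

definition Uset :: "('a \<times> 'b) set \<Rightarrow> 'a \<Rightarrow> 'b set" where
  "Uset E x = {u. (x, u) \<in> E}"

definition Xset :: "('a \<times> 'b) set \<Rightarrow> 'a set" where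
  "Xset E = {x. Uset E x \<noteq> {}}"

definition lstar :: "('a \<times> 'b) set \<Rightarrow> ('a \<Rightarrow> 'b \<Rightarrow> real) \<Rightarrow> 'a \<Rightarrow> real" where
  "lstar E lc x = (INF u \<in> Uset E x. lc x u)"

end

theory Submission
  imports Defs
begin

text \<open>Inside \<open>N\<close>, \<open>V\<^sub>T \<le> V\<^sub>\<infinity> \<le> \<gamma> \<ell>\<^sup>\<star>\<close>, since restricting an admissible
  infinite-horizon pair to \<open>[0, T]\<close> gives an admissible pair of no larger cost. Outside \<open>N\<close>,
  every state has distance at least \<open>r\<close> from \<open>xbar\<close>, where \<open>ball xbar r \<subseteq> N\<close>, so by (A1)
  \<open>\<ell>\<^sup>\<star> \<ge> \<eta>l r > 0\<close>; hence \<open>M > 0\<close> and \<open>V\<^sub>T x \<le> C = (C/M) M \<le> (C/M) \<ell>\<^sup>\<star> x\<close>.\<close>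

lemma admissible_mono:
  assumes "S \<subseteq> S'"
  shows "admissible f E x0 S' \<subseteq> admissible f E x0 S"
  using assms unfolding admissible_def is_solution_def by auto

lemma cost_mono:
  assumes "S \<subseteq> S'"
  shows "cost lc S x u \<le> cost lc S' x u"
  unfolding cost_def less_eq_ennreal.rep_eq[symmetric]
  using assms by (intro nn_integral_mono mult_right_mono) (auto simp: indicator_def)

lemma Vfun_mono:
  assumes "S \<subseteq> S'"
  shows "Vfun f E lc S x0 \<le> Vfun f E lc S' x0"
  unfolding Vfun_def
proof (rule INF_mono)
  fix p assume "p \<in> admissible f E x0 S'"
  then show "\<exists>q\<in>admissible f E x0 S. cost lc S (fst q) (snd q) \<le> cost lc S' (fst p) (snd p)"
    using admissible_mono[OF assms] cost_mono[OF assms] by blast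
qed

lemma V_T_le_V_inf: "V_T f E lc T x0 \<le> V_inf f E lc x0"
  unfolding V_T_def V_inf_def by (rule Vfun_mono) auto

lemma lstar_nonneg:
  assumes "x \<in> Xset E" and "\<And>u. lc x u \<ge> 0"
  shows "lstar E lc x \<ge> 0"
  using assms unfolding lstar_def Xset_def by (auto intro: cINF_greatest)

lemma class_Kinf_mono:
  assumes "class_Kinf \<eta>" "0 \<le> s" "s \<le> t"
  shows "\<eta> s \<le> \<eta> t"
proof (cases "s = t")
  case False
  then show ?thesis
    using assms strict_mono_onD[of "{0..}" \<eta> s t] unfolding class_Kinf_def by auto
qed simp

lemma class_Kinf_pos:
  assumes "class_Kinf \<eta>" "t > 0"
  shows "\<eta> t > 0"
  using assms strict_mono_onD[of "{0..}" \<eta> 0 t] unfolding class_Kinf_def by auto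

lemma INF_pos_away_from_center:
  fixes xbar :: "'a::real_normed_vector"
  assumes "class_Kinf \<eta>" "r > 0" "A \<noteq> {}"
    and far: "\<And>y. y \<in> A \<Longrightarrow> r \<le> norm (y - xbar)"
    and lower: "\<And>y. y \<in> A \<Longrightarrow> \<eta> (norm (y - xbar)) \<le> g y"
  shows "(INF y\<in>A. g y) > 0" and "\<And>y. y \<in> A \<Longrightarrow> (INF y\<in>A. g y) \<le> g y"
proof -
  have bound: "\<eta> r \<le> g y" if "y \<in> A" for y
    using class_Kinf_mono[OF assms(1), of r "norm (y - xbar)"] assms(2) far lower that by force
  have "\<eta> r \<le> (INF y\<in>A. g y)"
    using assms(3) bound by (rule cINF_greatest)
  then show "(INF y\<in>A. g y) > 0"
    using class_Kinf_pos[OF assms(1,2)] by linarith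
  show "(INF y\<in>A. g y) \<le> g y" if "y \<in> A" for y
    using that bound by (intro cINF_lower bdd_belowI2) auto
qed

lemma ereal_le_max_div_mult:
  fixes V :: ereal
  assumes "V \<le> ereal C" "C > 0" "0 < M" "M \<le> l"
  shows "V \<le> ereal (max (C / M) \<gamma> * l)"
proof -
  have "C = C / M * M" using assms(3) by simp
  also have "\<dots> \<le> C / M * l" using assms by (intro mult_left_mono) auto
  also have "\<dots> \<le> max (C / M) \<gamma> * l" using assms by (intro mult_right_mono) auto
  finally show ?thesis using assms(1) by (simp add: order_trans)
qed

theorem proposition1:
  fixes f :: "real^'n \<Rightarrow> real^'m \<Rightarrow> real^'n"
    and E :: "((real^'n) \<times> (real^'m)) set"
    and lc :: "real^'n \<Rightarrow> real^'m \<Rightarrow> real"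
    and xbar :: "real^'n" and ubar :: "real^'m"
    and T C \<gamma> :: real and N :: "(real^'n) set"
    and \<eta>l \<eta>u :: "real \<Rightarrow> real"
  assumes f_cont: "continuous_on UNIV (\<lambda>(x, u). f x u)"
    and f_lip: "loc_lipschitz_off0 f"
    and l_cont: "continuous_on UNIV (\<lambda>(x, u). lc x u)"
    and l_nonneg: "\<And>x u. lc x u \<ge> 0"
    and equil: "xbar \<in> Xset E" "ubar \<in> Uset E xbar" "f xbar ubar = 0"
    and A1: "class_Kinf \<eta>l" "class_Kinf \<eta>u"
       "\<And>x. x \<in> Xset E \<Longrightarrow> \<eta>l (norm (x - xbar)) \<le> lstar E lc x \<and> lstar E lc x \<le> \<eta>u (norm (x - xbar))"
    and A2: "\<gamma> > 0" "\<exists>W. open W \<and> xbar \<in> W \<and> W \<subseteq> N"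
       "\<And>x. x \<in> N \<inter> Xset E \<Longrightarrow> V_inf f E lc x \<le> ereal (\<gamma> * lstar E lc x)"
    and T_pos: "T > 0"
    and C_pos: "C > 0"
    and N_sub: "N \<inter> Xset E \<subseteq> {x \<in> Xset E. V_T f E lc T x \<le> ereal C}"
  shows "\<forall>x \<in> {x \<in> Xset E. V_T f E lc T x \<le> ereal C}.
           V_T f E lc T x \<le> ereal (max (C / (INF y \<in> Xset E - N. lstar E lc y)) \<gamma> * lstar E lc x)"
proof
  fix x assume "x \<in> {x \<in> Xset E. V_T f E lc T x \<le> ereal C}"
  then have x: "x \<in> Xset E" and VC: "V_T f E lc T x \<le> ereal C" by auto
  show "V_T f E lc T x \<le> ereal (max (C / (INF y \<in> Xset E - N. lstar E lc y)) \<gamma> * lstar E lc x)"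
  proof (cases "x \<in> N")
    case True
    have "V_T f E lc T x \<le> ereal (\<gamma> * lstar E lc x)"
      using V_T_le_V_inf A2(3) True x order_trans by blast
    also have "\<dots> \<le> ereal (max (C / (INF y \<in> Xset E - N. lstar E lc y)) \<gamma> * lstar E lc x)"
      using lstar_nonneg[OF x l_nonneg] by (auto intro: mult_right_mono)
    finally show ?thesis .
  next
    case False
    obtain r where r: "r > 0" "ball xbar r \<subseteq> N"
      using A2(2) openE by (metis subset_trans)
    have far: "r \<le> norm (y - xbar)" if "y \<in> Xset E - N" for y
      using r that by (force simp: dist_norm norm_minus_commute)
    note M = INF_pos_away_from_center[OF A1(1) r(1), of "Xset E - N" xbar "lstar E lc"]
    show ?thesis
      using x False far A1(3) by (intro ereal_le_max_div_mult[OF VC C_pos] M) auto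
  qed
qed

end
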